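(* Let $n\ge 2$ and let $p,q$ be positive integers with $\gcd(p,q)=1$. Let $A$ be the $n\times n$ integer matrix with columns $a_k=q e_k-p e_{k+1}$ ($1\le k\le n-1$) and $a_n=q e_n+p e_1$. Then for every $i\in\{1,\dots,n\}$, $$\min\{l\in\mathbb{Z}_{\ge1} : l e_i\in A\mathbb{Z}^n\}=p^n+q^n.$$ In particular, if moreover $p\neq q$, there exists a unilateral tiling of $(\mathbb{Z}/(p^n+q^n)\mathbb{Z})^n$ by discrete hypercubes of side lengths $p$ and $q$.
   Context: $e_i$ denotes the $i$-th standard unit vector. Let $N=p^n+q^n$. A discrete hypercube of side length $s$ in $(\mathbb{Z}/N\mathbb{Z})^n$ is the image of a set $x+\{0,1,\dots,s-1\}^n$, $x\in\mathbb{Z}^n$, under reduction modulo $N$. A tiling of $(\mathbb{Z}/N\mathbb{Z})^n$ by such hypercubes is a family of them that partitions $(\mathbb{Z}/N\mathbb{Z})^n$; it is unilateral if no two distinct tiles of the same side length $s$ share a full facet, i.e. there are no two tiles of side $s$ with corners $x,x'$ such that $x'-x\equiv \pm s e_i \pmod N$ for some $i$. *)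

theory Defs
  imports "HOL-Number_Theory.Number_Theory"
begin

text \<open>Vectors of Z^n are functions nat => int; only coordinates 0..n-1 matter
  (coordinates are 0-indexed: paper's e_1..e_n are unitv 0 .. unitv (n-1)).\<close>

definition unitv :: "nat \<Rightarrow> nat \<Rightarrow> int" where
  "unitv i = (\<lambda>j. if j = i then 1 else 0)"

definition colA :: "nat \<Rightarrow> nat \<Rightarrow> nat \<Rightarrow> nat \<Rightarrow> nat \<Rightarrow> int" where
  "colA n p q k = (if k + 1 < n
      then (\<lambda>j. int q * unitv k j - int p * unitv (k + 1) j)
      else (\<lambda>j. int q * unitv k j + int p * unitv 0 j))"

definition latticeA :: "nat \<Rightarrow> nat \<Rightarrow> nat \<Rightarrow> (nat \<Rightarrow> int) set" where
  "latticeA n p q = {(\<lambda>j. \<Sum>k<n. c k * colA n p q k j) | c :: nat \<Rightarrow> int. True}"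

text \<open>Points of (Z/NZ)^n, represented by canonical residues in coordinates < n
  and 0 elsewhere.\<close>
definition torus :: "nat \<Rightarrow> int \<Rightarrow> (nat \<Rightarrow> int) set" where
  "torus n N = {y. (\<forall>j<n. 0 \<le> y j \<and> y j < N) \<and> (\<forall>j\<ge>n. y j = 0)}"

definition cube :: "nat \<Rightarrow> int \<Rightarrow> (nat \<Rightarrow> int) \<Rightarrow> nat \<Rightarrow> (nat \<Rightarrow> int) set" where
  "cube n N x s = {(\<lambda>j. if j < n then (x j + d j) mod N else 0) | d.
                    \<forall>j<n. 0 \<le> d j \<and> d j < int s}"

text \<open>A tiling: a family T of tiles (corner, side) such that every point of the
  torus lies in exactly one tile of the family (cubes are automatically subsets).\<close>
definition is_tiling :: "nat \<Rightarrow> int \<Rightarrow> ((nat \<Rightarrow> int) \<times> nat) set \<Rightarrow> bool" where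
  "is_tiling n N T \<longleftrightarrow> (\<forall>y\<in>torus n N. \<exists>!t. t \<in> T \<and> y \<in> cube n N (fst t) (snd t))"

definition unilateral :: "nat \<Rightarrow> int \<Rightarrow> ((nat \<Rightarrow> int) \<times> nat) set \<Rightarrow> bool" where
  "unilateral n N T \<longleftrightarrow>
     \<not> (\<exists>x x' s. (x, s) \<in> T \<and> (x', s) \<in> T \<and> (x, s) \<noteq> (x', s) \<and>
          (\<exists>i<n. (\<forall>j<n. [x' j - x j = int s * unitv i j] (mod N)) \<or>
                 (\<forall>j<n. [x' j - x j = - (int s * unitv i j)] (mod N))))"

end

theory Submission
  imports Defs
begin

text \<open>The linear form \<open>phi y = \<Sum>\<^sub>j q\<^sup>j p\<^sup>n\<^sup>-\<^sup>1\<^sup>-\<^sup>j y\<^sub>j\<close> maps the lattice \<open>L = A \<int>\<^sup>n\<close> into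
  \<open>N \<int>\<close>, \<open>N = p\<^sup>n + q\<^sup>n\<close>; using that \<open>q\<close> is invertible modulo \<open>N\<close> one shows that \<open>L\<close> is exactly
  the set of \<open>y \<in> \<int>\<^sup>n\<close> with \<open>N dvd phi y\<close>. Since \<open>phi e\<^sub>i = q\<^sup>i p\<^sup>n\<^sup>-\<^sup>1\<^sup>-\<^sup>i\<close> is coprime to \<open>N\<close>,
  the least \<open>l\<close> with \<open>l e\<^sub>i \<in> L\<close> is \<open>N\<close>.

  For the tiling, a sign-propagation argument along the cyclic recurrence defining \<open>A c\<close> shows
  that no two points of \<open>F = [0,q)\<^sup>n \<union> ([0,p)\<^sup>n - p e\<^sub>0)\<close> differ by a lattice vector; as
  \<open>|F| = q\<^sup>n + p\<^sup>n\<close> is the index of \<open>L\<close>, \<open>F\<close> is a fundamental domain. Hence cubes of side \<open>q\<close>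
  at the points of \<open>L\<close> and cubes of side \<open>p\<close> at the points of \<open>L - p e\<^sub>0\<close> tile \<open>\<int>\<^sup>n\<close>, and,
  since \<open>N \<int>\<^sup>n \<subseteq> L\<close>, also the torus. Two tiles of side \<open>s\<close> differ by a vector of \<open>L\<close>, which
  cannot be \<open>\<plusminus>s e\<^sub>i\<close> modulo \<open>N\<close> because \<open>0 < s < N\<close>.\<close>

text \<open>Coordinatewise, \<open>y = A c\<close> reads \<open>y\<^sub>0 = q c\<^sub>0 + p c\<^sub>n\<^sub>-\<^sub>1\<close> and \<open>y\<^sub>j = q c\<^sub>j - p c\<^sub>j\<^sub>-\<^sub>1\<close>
  (\<open>a = q\<close>, \<open>b = p\<close> below).  When the coordinates of \<open>y\<close> are small, the sign of \<open>c\<^sub>0\<close>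
  propagates along the recurrence and then clashes with the wrap-around equation.\<close>

lemma recurrence_nonpos:
  fixes a b :: int and c y :: "nat \<Rightarrow> int"
  assumes a: "0 < a" and b: "0 \<le> b"
    and rec: "\<And>j. 0 < j \<Longrightarrow> j < n \<Longrightarrow> y j = a * c j - b * c (j - 1)"
    and bound: "\<And>j. 0 < j \<Longrightarrow> j < n \<Longrightarrow> y j < a"
    and c0: "c 0 \<le> 0" and j: "j < n"
  shows "c j \<le> 0"
  using j
proof (induction j)
  case 0
  then show ?case using c0 by simp
next
  case (Suc j)
  then have "b * c j \<le> 0" using b by (simp add: mult_nonneg_nonpos)
  then have "a * c (Suc j) < a * 1" using rec[of "Suc j"] bound[of "Suc j"] Suc.prems by simp
  then show ?case using a by (simp add: mult_less_cancel_left_pos)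
qed

lemma recurrence_nonneg:
  fixes a b :: int and c y :: "nat \<Rightarrow> int"
  assumes "0 < a" and "0 \<le> b"
    and "\<And>j. 0 < j \<Longrightarrow> j < n \<Longrightarrow> y j = a * c j - b * c (j - 1)"
    and "\<And>j. 0 < j \<Longrightarrow> j < n \<Longrightarrow> - a < y j"
    and "0 \<le> c 0" and "j < n"
  shows "0 \<le> c j"
proof -
  have "- c j \<le> 0"
  proof (rule recurrence_nonpos[of a b n "\<lambda>j. - y j"])
    show "- y i < a" if "0 < i" "i < n" for i using assms(4)[OF that] by simp
  qed (use assms in \<open>simp_all add: algebra_simps\<close>)
  then show ?thesis by simp
qed

lemma recurrence_ge_1:
  fixes a b :: int and c y :: "nat \<Rightarrow> int"
  assumes "0 < a" and "0 \<le> b"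
    and "\<And>j. 0 < j \<Longrightarrow> j < n \<Longrightarrow> y j = a * c j - b * c (j - 1)"
    and "\<And>j. 0 < j \<Longrightarrow> j < n \<Longrightarrow> - b < y j"
    and "1 \<le> c 0" and "j < n"
  shows "1 \<le> c j"
proof -
  have "1 - c j \<le> 0"
  proof (rule recurrence_nonpos[of a b n "\<lambda>j. a - b - y j"])
    show "a - b - y i < a" if "0 < i" "i < n" for i using assms(4)[OF that] by simp
  qed (use assms in \<open>simp_all add: algebra_simps\<close>)
  then show ?thesis by simp
qed

lemma cyclic_recurrence_eq_0:
  fixes a b :: int and c y :: "nat \<Rightarrow> int"
  assumes a: "0 < a" and b: "0 \<le> b" and n: "0 < n"
    and rec: "\<And>j. 0 < j \<Longrightarrow> j < n \<Longrightarrow> y j = a * c j - b * c (j - 1)"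
    and rec0: "y 0 = a * c 0 + b * c (n - 1)"
    and bound: "\<And>j. j < n \<Longrightarrow> \<bar>y j\<bar> < a"
    and j: "j < n"
  shows "c j = 0"
proof -
  have nonneg_start: "0 \<le> c' 0"
    if rec': "\<And>j. 0 < j \<Longrightarrow> j < n \<Longrightarrow> y' j = a * c' j - b * c' (j - 1)"
      and rec0': "y' 0 = a * c' 0 + b * c' (n - 1)"
      and bound': "\<And>j. j < n \<Longrightarrow> \<bar>y' j\<bar> < a"
    for c' y' :: "nat \<Rightarrow> int"
  proof (rule ccontr)
    assume "\<not> 0 \<le> c' 0"
    then have "c' (n - 1) \<le> 0"
      using recurrence_nonpos[of a b n y' c', OF a b rec'] bound' n by (simp add: abs_less_iff)
    then have "b * c' (n - 1) \<le> 0" using b by (simp add: mult_nonneg_nonpos)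
    then have "a * (- 1) < a * c' 0" using rec0' bound'[of 0] n by (simp add: abs_less_iff)
    then have "- 1 < c' 0" using a mult_less_cancel_left_pos by blast
    then show False using \<open>\<not> 0 \<le> c' 0\<close> by simp
  qed
  have "0 \<le> c 0" by (rule nonneg_start[OF rec rec0 bound])
  moreover have "0 \<le> - c 0"
    by (rule nonneg_start[of "\<lambda>j. - y j"]) (use rec rec0 bound in \<open>auto simp: algebra_simps\<close>)
  ultimately have "c 0 = 0" by simp
  then show ?thesis
    using recurrence_nonpos[of a b n y c, OF a b rec _ _ j] recurrence_nonneg[of a b n y c, OF a b rec _ _ j] bound
    by (force simp: abs_less_iff)
qed

lemma cyclic_recurrence_shifted_bounds:
  fixes a b :: int and c y :: "nat \<Rightarrow> int"
  assumes a: "0 < a" and b: "0 \<le> b" and n: "0 < n"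
    and rec: "\<And>j. 0 < j \<Longrightarrow> j < n \<Longrightarrow> y j = a * c j - b * c (j - 1)"
    and rec0: "y 0 = a * c 0 + b * c (n - 1)"
    and bound: "\<And>j. 0 < j \<Longrightarrow> j < n \<Longrightarrow> - b < y j \<and> y j < a"
    and bound0: "0 < y 0" "y 0 < a + b"
  shows False
proof (cases "c 0 \<le> 0")
  case True
  then have "c (n - 1) \<le> 0" using recurrence_nonpos[of a b n y c, OF a b rec] bound n by simp
  then show False
    using True rec0 bound0 a b by (smt (verit) mult_nonneg_nonpos)
next
  case False
  then have "1 \<le> c (n - 1)" using recurrence_ge_1[of a b n y c, OF a b rec] bound n by simp
  then show False
    using False rec0 bound0 a b by (smt (verit) mult_le_cancel_left1 mult_le_cancel_left_pos)
qed

lemma coprime_power_sum: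
  fixes a b :: int
  assumes "coprime a b" and "0 < n"
  shows "coprime a (b ^ n + a ^ n)"
proof -
  have "b ^ n + a ^ n = a ^ (n - 1) * a + b ^ n"
    using \<open>0 < n\<close> by (simp add: power_eq_if)
  then have "gcd a (b ^ n + a ^ n) = gcd a (b ^ n)" by (simp only: gcd_add_mult)
  then show ?thesis using assms by (simp add: coprime_iff_gcd_eq_1[symmetric])
qed

lemma torus_bij_PiE:
  "bij_betw (\<lambda>y. restrict y {..<n}) (torus n s) (PiE {..<n} (\<lambda>_. {0..<s}))"
  unfolding bij_betw_def
proof
  show "inj_on (\<lambda>y. restrict y {..<n}) (torus n s)"
    by (rule inj_onI) (simp add: torus_def fun_eq_iff restrict_def, metis not_less)
  show "(\<lambda>y. restrict y {..<n}) ` torus n s = PiE {..<n} (\<lambda>_. {0..<s})"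
  proof
    show "(\<lambda>y. restrict y {..<n}) ` torus n s \<subseteq> PiE {..<n} (\<lambda>_. {0..<s})"
      by (auto simp: torus_def split: if_splits)
  next
    show "PiE {..<n} (\<lambda>_. {0..<s}) \<subseteq> (\<lambda>y. restrict y {..<n}) ` torus n s"
    proof
      fix f assume f: "f \<in> PiE {..<n} (\<lambda>_. {0..<s})"
      show "f \<in> (\<lambda>y. restrict y {..<n}) ` torus n s"
        by (rule image_eqI[where x = "\<lambda>j. if j < n then f j else 0"])
          (use f in \<open>auto simp: torus_def PiE_def extensional_def fun_eq_iff\<close>)
    qed
  qed
qed

lemma finite_torus: "finite (torus n s)"
  using bij_betw_finite[OF torus_bij_PiE] by (simp add: finite_PiE)

lemma card_torus: "card (torus n s) = nat s ^ n"
  using bij_betw_same_card[OF torus_bij_PiE] by (simp add: card_PiE)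

lemma torus_diff_bound:
  assumes "y \<in> torus n s" and "y' \<in> torus n s" and "j < n"
  shows "\<bar>y j - y' j\<bar> < s"
proof -
  have "0 \<le> y j" "y j < s" "0 \<le> y' j" "y' j < s"
    using assms by (simp_all add: torus_def)
  then show ?thesis by linarith
qed

lemma unitv_times: "unitv i j * x = (if j = i then x else 0)"
  by (simp add: unitv_def)

lemma times_unitv: "x * unitv i j = (if j = i then x else 0)"
  by (simp add: unitv_def)

locale pq_lattice =
  fixes n p q :: nat
  assumes n_pos: "0 < n" and p_pos: "0 < p" and q_pos: "0 < q" and coprime_pq: "coprime p q"
begin

abbreviation L :: "(nat \<Rightarrow> int) set" where "L \<equiv> latticeA n p q"
abbreviation N :: int where "N \<equiv> int p ^ n + int q ^ n"
abbreviation Zn :: "(nat \<Rightarrow> int) set" where "Zn \<equiv> {y. \<forall>j\<ge>n. y j = 0}"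

lemma N_pos: "0 < N"
  using p_pos q_pos by (simp add: add_pos_pos)

lemma coprime_q_N: "coprime (int q) N"
  using coprime_power_sum[of "int q" "int p" n] coprime_pq n_pos by (simp add: coprime_commute)

lemma coprime_p_N: "coprime (int p) N"
  using coprime_power_sum[of "int p" "int q" n] coprime_pq n_pos by (simp add: add.commute)

lemma sum_colA:
  "(\<Sum>k<n. c k * colA n p q k j) =
     (if n \<le> j then 0 else if j = 0 then int q * c 0 + int p * c (n - 1)
      else int q * c j - int p * c (j - 1))"
proof (cases "n \<le> j")
  case True
  then show ?thesis by (auto intro!: sum.neutral simp: colA_def unitv_def)
next
  case False
  have "(\<Sum>k<n. c k * colA n p q k j) = (\<Sum>k<n. (if k = j then int q * c k else 0)
       + (if j \<noteq> 0 \<and> k = j - 1 then - int p * c k else 0)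
       + (if j = 0 \<and> k = n - 1 then int p * c k else 0))"
    by (rule sum.cong) (use False in \<open>auto simp: colA_def unitv_def algebra_simps\<close>)
  also have "\<dots> = (if j = 0 then int q * c 0 + int p * c (n - 1) else int q * c j - int p * c (j - 1))"
    using False n_pos by (simp add: sum.distrib cong: if_cong)
  finally show ?thesis using False by simp
qed

lemma lattice_coeffs:
  assumes "y \<in> L"
  obtains c where "y = (\<lambda>j. \<Sum>k<n. c k * colA n p q k j)"
    and "y 0 = int q * c 0 + int p * c (n - 1)"
    and "\<And>j. 0 < j \<Longrightarrow> j < n \<Longrightarrow> y j = int q * c j - int p * c (j - 1)"
  using assms n_pos unfolding latticeA_def by (auto simp: sum_colA)

lemma lattice_subset_Zn: "y \<in> L \<Longrightarrow> y \<in> Zn"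
  unfolding latticeA_def by (auto simp: sum_colA)

lemma lattice_eqI: "y \<in> L \<Longrightarrow> (\<And>j. y j = z j) \<Longrightarrow> z \<in> L"
  by (metis ext)

lemma lattice_add:
  assumes "y \<in> L" and "z \<in> L"
  shows "(\<lambda>j. y j + z j) \<in> L"
proof -
  obtain c c' where "y = (\<lambda>j. \<Sum>k<n. c k * colA n p q k j)" "z = (\<lambda>j. \<Sum>k<n. c' k * colA n p q k j)"
    using assms unfolding latticeA_def by blast
  then show ?thesis
    unfolding latticeA_def by (auto intro!: exI[of _ "\<lambda>k. c k + c' k"] simp: algebra_simps sum.distrib)
qed

lemma lattice_smult:
  assumes "y \<in> L"
  shows "(\<lambda>j. a * y j) \<in> L"
proof -
  obtain c where "y = (\<lambda>j. \<Sum>k<n. c k * colA n p q k j)"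
    using assms unfolding latticeA_def by blast
  then show ?thesis
    unfolding latticeA_def by (auto intro!: exI[of _ "\<lambda>k. a * c k"] simp: sum_distrib_left mult.assoc)
qed

lemma lattice_diff: "y \<in> L \<Longrightarrow> z \<in> L \<Longrightarrow> (\<lambda>j. y j - z j) \<in> L"
  using lattice_add[of y "\<lambda>j. - 1 * z j"] lattice_smult[of z "- 1"] by simp

lemma lattice_colA: "k < n \<Longrightarrow> colA n p q k \<in> L"
  unfolding latticeA_def
  by (auto intro!: exI[of _ "\<lambda>k'. if k' = k then 1 else 0"] simp: if_distrib[of "\<lambda>x. x * _"] cong: if_cong)

lemma lattice_zero: "(\<lambda>j. 0) \<in> L"
  using lattice_smult[OF lattice_colA[OF n_pos], of 0] by simp

lemma lattice_sum:
  "finite K \<Longrightarrow> (\<And>k. k \<in> K \<Longrightarrow> v k \<in> L) \<Longrightarrow> (\<lambda>j. \<Sum>k\<in>K. v k j) \<in> L"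
proof (induction K rule: finite_induct)
  case empty
  then show ?case using lattice_zero by simp
next
  case (insert k K)
  then show ?case using lattice_add[of "v k" "\<lambda>j. \<Sum>k\<in>K. v k j"] by simp
qed

lemma lattice_power_chain:
  "k + m < n \<Longrightarrow> (\<lambda>j. int q ^ m * unitv k j - int p ^ m * unitv (k + m) j) \<in> L"
proof (induction m)
  case 0
  then show ?case using lattice_zero by simp
next
  case (Suc m)
  have col: "colA n p q (k + m) = (\<lambda>j. int q * unitv (k + m) j - int p * unitv (k + m + 1) j)"
    using Suc.prems by (simp add: colA_def)
  have "(\<lambda>j. int q * (int q ^ m * unitv k j - int p ^ m * unitv (k + m) j)
            + int p ^ m * colA n p q (k + m) j) \<in> L"
    using Suc by (intro lattice_add lattice_smult lattice_colA) simp_all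
  then show ?case by (rule lattice_eqI) (simp add: col algebra_simps)
qed

lemma lattice_N_unitv:
  assumes i: "i < n"
  shows "(\<lambda>j. N * unitv i j) \<in> L"
proof -
  define m where "m = n - 1 - i"
  have n_eq: "n = i + Suc m" using i unfolding m_def by simp
  have last: "(\<lambda>j. int q * unitv (n - 1) j + int p * unitv 0 j) \<in> L"
    using lattice_colA[of "n - 1"] n_pos by (simp add: colA_def)
  have "(\<lambda>j. int q ^ Suc i * (int q ^ m * unitv i j - int p ^ m * unitv (i + m) j)
            + int q ^ i * int p ^ m * (int q * unitv (n - 1) j + int p * unitv 0 j)
            - int p ^ Suc m * (int q ^ i * unitv 0 j - int p ^ i * unitv (0 + i) j)) \<in> L"
    using i n_eq by (intro lattice_diff lattice_add lattice_smult last lattice_power_chain) simp_all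
  then show ?thesis
    by (rule lattice_eqI) (simp add: n_eq power_add algebra_simps)
qed

lemma unitv_expansion: "y \<in> Zn \<Longrightarrow> (\<Sum>k<n. y k * unitv k j) = y j"
  by (cases "j < n") (auto simp: times_unitv)

lemma lattice_cong_mod_N:
  assumes v: "v \<in> L" and w: "w \<in> Zn" and cong: "\<And>j. j < n \<Longrightarrow> [v j = w j] (mod N)"
  shows "w \<in> L"
proof -
  have "(\<lambda>j. v j + (\<Sum>k<n. (w k - v k) div N * (N * unitv k j))) \<in> L"
    using v by (intro lattice_add lattice_sum) (auto intro: lattice_smult[OF lattice_N_unitv])
  moreover have "(w k - v k) div N * N = w k - v k" if "k < n" for k
    using cong[OF that] by (simp add: cong_iff_dvd_diff dvd_diff_commute)
  then have "(\<Sum>k<n. (w k - v k) div N * (N * unitv k j)) = (\<Sum>k<n. (w k - v k) * unitv k j)" for j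
    by (intro sum.cong) (simp_all add: mult.assoc[symmetric])
  moreover have "(\<Sum>k<n. (w k - v k) * unitv k j) = w j - v j" for j
    using unitv_expansion[of "\<lambda>j. w j - v j" j] w lattice_subset_Zn[OF v] by simp
  ultimately show ?thesis by (auto elim: lattice_eqI)
qed

text \<open>The weights \<open>w\<^sub>j = q\<^sup>j p\<^sup>n\<^sup>-\<^sup>1\<^sup>-\<^sup>j\<close> satisfy \<open>q w\<^sub>k = p w\<^sub>k\<^sub>+\<^sub>1\<close>, so \<open>phi\<close> kills the
  columns \<open>a\<^sub>k\<close> with \<open>k < n - 1\<close> and sends the last one to \<open>N\<close>.\<close>

definition phi :: "(nat \<Rightarrow> int) \<Rightarrow> int" where
  "phi y = (\<Sum>j<n. y j * (int q ^ j * int p ^ (n - 1 - j)))"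

lemma phi_diff: "phi (\<lambda>j. y j - z j) = phi y - phi z"
  unfolding phi_def by (simp add: algebra_simps sum_subtractf)

lemma phi_add: "phi (\<lambda>j. y j + z j) = phi y + phi z"
  unfolding phi_def by (simp add: algebra_simps sum.distrib)

lemma phi_smult: "phi (\<lambda>j. a * y j) = a * phi y"
  unfolding phi_def by (simp add: algebra_simps sum_distrib_left)

lemma phi_sum: "phi (\<lambda>j. \<Sum>k\<in>K. v k j) = (\<Sum>k\<in>K. phi (v k))"
  unfolding phi_def by (simp add: sum_distrib_right sum.swap[of _ "{..<n}"])

lemma phi_unitv: "i < n \<Longrightarrow> phi (unitv i) = int q ^ i * int p ^ (n - 1 - i)"
  unfolding phi_def by (simp add: unitv_times)

lemma phi_colA:
  assumes k: "k < n"
  shows "phi (colA n p q k) = (if k + 1 < n then 0 else N)"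
proof (cases "k + 1 < n")
  case True
  then have "n - 1 - k = Suc (n - 1 - (k + 1))" by simp
  then show ?thesis
    using True by (simp add: colA_def phi_diff phi_smult phi_unitv algebra_simps)
next
  case False
  then have "k = n - 1" "n = Suc (n - 1)" using k by simp_all
  then show ?thesis
    using False n_pos by (simp add: colA_def phi_add phi_smult phi_unitv power_Suc[symmetric])
qed

lemma N_dvd_phi: "y \<in> L \<Longrightarrow> N dvd phi y"
  unfolding latticeA_def by (auto simp: phi_sum phi_smult phi_colA intro!: dvd_sum)

text \<open>Modulo \<open>L\<close>, every \<open>e\<^sub>k\<close> is a multiple of \<open>e\<^sub>n\<^sub>-\<^sub>1\<close>, because \<open>q e\<^sub>k \<equiv> p e\<^sub>k\<^sub>+\<^sub>1\<close>.\<close>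

lemma lattice_unitv_cong_last:
  assumes u: "[int q * u = 1] (mod N)" and k: "k < n"
  shows "(\<lambda>j. unitv k j - (u * int p) ^ (n - 1 - k) * unitv (n - 1) j) \<in> L"
proof (rule lattice_cong_mod_N)
  let ?m = "n - 1 - k"
  show "(\<lambda>j. u ^ ?m * (int q ^ ?m * unitv k j - int p ^ ?m * unitv (k + ?m) j)) \<in> L"
    using k by (intro lattice_smult lattice_power_chain) simp
  have "[(int q * u) ^ ?m * unitv k j - (u * int p) ^ ?m * unitv (n - 1) j
      = 1 * unitv k j - (u * int p) ^ ?m * unitv (n - 1) j] (mod N)" for j
    by (intro cong_diff cong_mult cong_refl) (use cong_pow[OF u] in simp)
  then show "[u ^ ?m * (int q ^ ?m * unitv k j - int p ^ ?m * unitv (k + ?m) j)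
      = unitv k j - (u * int p) ^ ?m * unitv (n - 1) j] (mod N)" for j
    using k by (simp add: algebra_simps)
qed (use k in \<open>auto simp: unitv_def\<close>)

lemma lattice_iff_N_dvd_phi:
  assumes y: "y \<in> Zn"
  shows "y \<in> L \<longleftrightarrow> N dvd phi y"
proof
  show "y \<in> L \<Longrightarrow> N dvd phi y" by (rule N_dvd_phi)
next
  assume dvd_y: "N dvd phi y"
  obtain u where u: "[int q * u = 1] (mod N)"
    using cong_solve_coprime_int[OF coprime_q_N] by blast
  define z where "z = (\<Sum>k<n. y k * (u * int p) ^ (n - 1 - k))"
  have "(\<lambda>j. \<Sum>k<n. y k * (unitv k j - (u * int p) ^ (n - 1 - k) * unitv (n - 1) j)) \<in> L"
    using lattice_unitv_cong_last[OF u] by (intro lattice_sum lattice_smult) auto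
  then have yz: "(\<lambda>j. y j - z * unitv (n - 1) j) \<in> L"
    by (rule lattice_eqI) (simp add: z_def right_diff_distrib sum_subtractf sum_distrib_right
        unitv_expansion[OF y] mult.assoc)
  have "N dvd phi y - z * int q ^ (n - 1)"
    using N_dvd_phi[OF yz] phi_unitv[of "n - 1"] n_pos by (simp add: phi_diff phi_smult)
  from dvd_diff[OF dvd_y this] have "N dvd z * int q ^ (n - 1)" by simp
  then have "N dvd z"
    using coprime_q_N by (simp add: coprime_commute coprime_dvd_mult_left_iff)
  then obtain t where "z = N * t" by (elim dvdE)
  then have "(\<lambda>j. z * unitv (n - 1) j) \<in> L"
    using lattice_smult[OF lattice_N_unitv[of "n - 1"], of t] n_pos by (simp add: ac_simps)
  from lattice_add[OF yz this] show "y \<in> L" by (rule lattice_eqI) simp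
qed

lemma N_dvd_if_unitv_multiple:
  assumes i: "i < n" and a: "(\<lambda>j. a * unitv i j) \<in> L"
  shows "N dvd a"
proof -
  have "N dvd a * (int q ^ i * int p ^ (n - 1 - i))"
    using N_dvd_phi[OF a] by (simp add: phi_smult phi_unitv[OF i])
  then show ?thesis
    using coprime_q_N coprime_p_N by (simp add: coprime_commute coprime_dvd_mult_left_iff)
qed

lemma least_multiple_unitv:
  assumes i: "i < n"
  shows "(LEAST l::nat. 1 \<le> l \<and> (\<lambda>j. int l * unitv i j) \<in> L) = p ^ n + q ^ n"
proof (rule Least_equality)
  show "1 \<le> p ^ n + q ^ n \<and> (\<lambda>j. int (p ^ n + q ^ n) * unitv i j) \<in> L"
    using lattice_N_unitv[OF i] q_pos by (simp add: Suc_leI)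
next
  fix l :: nat
  assume l: "1 \<le> l \<and> (\<lambda>j. int l * unitv i j) \<in> L"
  then have "int (p ^ n + q ^ n) dvd int l"
    using N_dvd_if_unitv_multiple[OF i] by simp
  then have "p ^ n + q ^ n dvd l" by (simp only: of_nat_dvd_iff)
  then show "p ^ n + q ^ n \<le> l" using l by (simp add: dvd_imp_le)
qed

lemma lattice_eq_0_if_abs_less_q:
  assumes y: "y \<in> L" and bound: "\<And>j. j < n \<Longrightarrow> \<bar>y j\<bar> < int q"
  shows "y = (\<lambda>j. 0)"
proof -
  obtain c where y_eq: "y = (\<lambda>j. \<Sum>k<n. c k * colA n p q k j)"
    and rec0: "y 0 = int q * c 0 + int p * c (n - 1)"
    and rec: "\<And>j. 0 < j \<Longrightarrow> j < n \<Longrightarrow> y j = int q * c j - int p * c (j - 1)"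
    using lattice_coeffs[OF y] by blast
  have "c k = 0" if "k < n" for k
    using cyclic_recurrence_eq_0[of "int q" "int p" n y c, OF _ _ n_pos rec rec0 bound that] q_pos
    by simp
  then show ?thesis unfolding y_eq by simp
qed

lemma lattice_eq_0_if_abs_less_p:
  assumes y: "y \<in> L" and bound: "\<And>j. j < n \<Longrightarrow> \<bar>y j\<bar> < int p"
  shows "y = (\<lambda>j. 0)"
proof -
  obtain c where y_eq: "y = (\<lambda>j. \<Sum>k<n. c k * colA n p q k j)"
    and rec0: "y 0 = int q * c 0 + int p * c (n - 1)"
    and rec: "\<And>j. 0 < j \<Longrightarrow> j < n \<Longrightarrow> y j = int q * c j - int p * c (j - 1)"
    using lattice_coeffs[OF y] by blast
  \<comment> \<open>Read backwards, the recurrence has the roles of \<open>p\<close> and \<open>q\<close> exchanged.\<close>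
  define c' where "c' m = c (n - 1 - m)" for m
  define y' where "y' m = (if m = 0 then y 0 else - y (n - m))" for m
  have rec': "y' m = int p * c' m - int q * c' (m - 1)" if "0 < m" "m < n" for m
    using rec[of "n - m"] that unfolding y'_def c'_def by (simp add: Suc_diff_Suc)
  have rec0': "y' 0 = int p * c' 0 + int q * c' (n - 1)"
    using rec0 unfolding y'_def c'_def by simp
  have bound': "\<bar>y' m\<bar> < int p" if "m < n" for m
    using bound[of 0] bound[of "n - m"] that n_pos unfolding y'_def by auto
  have c'_zero: "c' m = 0" if "m < n" for m
    using cyclic_recurrence_eq_0[of "int p" "int q" n y' c', OF _ _ n_pos rec' rec0' bound' that] p_pos
    by simp
  have "c k = 0" if "k < n" for k
    using c'_zero[of "n - 1 - k"] that unfolding c'_def by simp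
  then show ?thesis unfolding y_eq by simp
qed

lemma lattice_shifted_bounds:
  assumes y: "y \<in> L"
    and bound: "\<And>j. 0 < j \<Longrightarrow> j < n \<Longrightarrow> - int p < y j \<and> y j < int q"
    and bound0: "0 < y 0" "y 0 < int q + int p"
  shows False
proof -
  obtain c where rec0: "y 0 = int q * c 0 + int p * c (n - 1)"
    and rec: "\<And>j. 0 < j \<Longrightarrow> j < n \<Longrightarrow> y j = int q * c j - int p * c (j - 1)"
    using lattice_coeffs[OF y] by blast
  show False
    using cyclic_recurrence_shifted_bounds[of "int q" "int p" n y c, OF _ _ n_pos rec rec0 bound bound0] q_pos
    by simp
qed

end

locale pq_tiling = pq_lattice +
  assumes p_ne_q: "p \<noteq> q"
begin

text \<open>A cube of side \<open>s\<close> is placed at the points of \<open>L - shift s\<close>; the set \<open>cell q \<union> cell p\<close>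
  of offsets is a fundamental domain of \<open>L\<close>.\<close>

definition shift :: "nat \<Rightarrow> nat \<Rightarrow> int" where
  "shift s = (if s = q then (\<lambda>j. 0) else (\<lambda>j. int p * unitv 0 j))"

definition cell :: "nat \<Rightarrow> (nat \<Rightarrow> int) set" where
  "cell s = (\<lambda>d j. d j - shift s j) ` torus n (int s)"

lemma cell_q: "cell q = torus n (int q)"
  by (simp add: cell_def shift_def)

lemma cell_p: "cell p = (\<lambda>d j. d j - int p * unitv 0 j) ` torus n (int p)"
  using p_ne_q by (simp add: cell_def shift_def)

lemma shift_in_Zn: "shift s \<in> Zn"
  using n_pos by (auto simp: shift_def unitv_def)

lemma cell_subset_Zn: "cell s \<subseteq> Zn"
  using shift_in_Zn by (auto simp: cell_def torus_def)

lemma cells_disjoint: "cell q \<inter> cell p = {}"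
  using n_pos p_pos by (force simp: cell_q cell_p torus_def unitv_def)

lemma cell_determines_side:
  "s \<in> {p, q} \<Longrightarrow> s' \<in> {p, q} \<Longrightarrow> f \<in> cell s \<Longrightarrow> f \<in> cell s' \<Longrightarrow> s = s'"
  using cells_disjoint by blast

lemma card_cell: "card (cell s) = s ^ n"
proof -
  have "inj_on (\<lambda>d j. d j - shift s j) (torus n (int s))"
    by (rule inj_onI) (simp add: fun_eq_iff)
  then show ?thesis by (simp add: cell_def card_image card_torus)
qed

lemma cells_not_lattice_congruent:
  assumes d: "d \<in> torus n (int q)" and e: "e \<in> torus n (int p)"
  shows "(\<lambda>j. d j - (e j - int p * unitv 0 j)) \<notin> L"
proof
  have d: "0 \<le> d j" "d j < int q" and e: "0 \<le> e j" "e j < int p" if "j < n" for j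
    using that d e by (simp_all add: torus_def)
  assume "(\<lambda>j. d j - (e j - int p * unitv 0 j)) \<in> L"
  then show False
    by (rule lattice_shifted_bounds) (use d e n_pos in \<open>force simp: unitv_def\<close>)+
qed

lemma fundamental_domain_unique:
  assumes f: "f \<in> cell q \<union> cell p" and f': "f' \<in> cell q \<union> cell p"
    and diff: "(\<lambda>j. f j - f' j) \<in> L"
  shows "f = f'"
proof -
  have neg: "(\<lambda>j. f' j - f j) \<in> L"
    using lattice_smult[OF diff, of "- 1"] by simp
  consider "f \<in> cell q" "f' \<in> cell q" | "f \<in> cell p" "f' \<in> cell p"
    | "f \<in> cell q" "f' \<in> cell p" | "f \<in> cell p" "f' \<in> cell q"
    using f f' by blast
  then show ?thesis
  proof cases
    case 1
    then have "(\<lambda>j. f j - f' j) = (\<lambda>j. 0)"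
      by (intro lattice_eq_0_if_abs_less_q[OF diff]) (simp add: cell_q torus_diff_bound)
    then show ?thesis by (simp add: fun_eq_iff)
  next
    case 2
    then obtain d d' where "d \<in> torus n (int p)" "d' \<in> torus n (int p)"
      and "f = (\<lambda>j. d j - int p * unitv 0 j)" "f' = (\<lambda>j. d' j - int p * unitv 0 j)"
      by (auto simp: cell_p)
    then have "(\<lambda>j. f j - f' j) = (\<lambda>j. 0)"
      by (intro lattice_eq_0_if_abs_less_p[OF diff]) (simp add: torus_diff_bound)
    then show ?thesis by (simp add: fun_eq_iff)
  next
    case 3
    then show ?thesis using cells_not_lattice_congruent diff by (auto simp: cell_q cell_p)
  next
    case 4
    then show ?thesis using cells_not_lattice_congruent neg by (auto simp: cell_q cell_p)
  qed
qed

text \<open>\<open>phi mod N\<close> is injective on the fundamental domain, which has \<open>q\<^sup>n + p\<^sup>n\<close>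
  elements, so it hits every residue class.\<close>

lemma fundamental_domain_exists:
  assumes y: "y \<in> Zn"
  obtains f where "f \<in> cell q \<union> cell p" and "(\<lambda>j. y j - f j) \<in> L"
proof -
  let ?F = "cell q \<union> cell p"
  let ?g = "\<lambda>f. phi f mod N"
  have lattice_if_cong: "(\<lambda>j. v j - f j) \<in> L" if "v \<in> Zn" "f \<in> ?F" "?g v = ?g f" for v f
  proof -
    have "(\<lambda>j. v j - f j) \<in> Zn" using that(1,2) cell_subset_Zn by auto
    moreover have "N dvd phi (\<lambda>j. v j - f j)"
      using that(3) by (simp add: phi_diff mod_eq_dvd_iff)
    ultimately show ?thesis by (simp add: lattice_iff_N_dvd_phi)
  qed
  have "inj_on ?g ?F"
  proof (rule inj_onI)
    fix f f' assume "f \<in> ?F" "f' \<in> ?F" "?g f = ?g f'"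
    then show "f = f'"
      using fundamental_domain_unique lattice_if_cong cell_subset_Zn by blast
  qed
  moreover have "card ?F = card {0..<N}"
  proof -
    have "finite (cell s)" for s by (simp add: cell_def finite_torus)
    then have "card ?F = q ^ n + p ^ n"
      using cells_disjoint by (simp add: card_Un_disjoint card_cell)
    moreover have "N = int (q ^ n + p ^ n)" by simp
    ultimately show ?thesis by (simp only: card_atLeastLessThan_int nat_int)
  qed
  ultimately have "card (?g ` ?F) = card {0..<N}" by (simp add: card_image)
  moreover have "?g ` ?F \<subseteq> {0..<N}" using N_pos by auto
  ultimately have "?g ` ?F = {0..<N}" by (simp add: card_subset_eq)
  then have "?g y \<in> ?g ` ?F" using N_pos by simp
  then obtain f where f: "f \<in> ?F" and "?g y = ?g f" by blast
  with lattice_if_cong[OF y] show ?thesis by (intro that) auto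
qed

lemma torus_subset_Zn: "torus n s \<subseteq> Zn"
  by (auto simp: torus_def)

definition reduce :: "(nat \<Rightarrow> int) \<Rightarrow> nat \<Rightarrow> int" where
  "reduce v = (\<lambda>j. if j < n then v j mod N else 0)"

lemma reduce_in_torus: "reduce v \<in> torus n N"
  using N_pos by (auto simp: reduce_def torus_def)

lemma reduce_torus: "y \<in> torus n N \<Longrightarrow> reduce y = y"
  by (auto simp: reduce_def torus_def fun_eq_iff)

lemma reduce_eq_iff: "reduce v = reduce w \<longleftrightarrow> (\<forall>j<n. [v j = w j] (mod N))"
  by (auto simp: reduce_def cong_def fun_eq_iff)

lemma lattice_if_reduce_eq:
  assumes "v \<in> Zn" and "w \<in> Zn" and "reduce v = reduce w"
  shows "(\<lambda>j. v j - w j) \<in> L"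
  by (rule lattice_cong_mod_N[OF lattice_zero])
    (use assms in \<open>auto simp: reduce_eq_iff cong_iff_dvd_diff dvd_diff_commute\<close>)

lemma cube_eq_reduce_image: "cube n N x s = (\<lambda>d. reduce (\<lambda>j. x j + d j)) ` torus n (int s)"
proof
  show "cube n N x s \<subseteq> (\<lambda>d. reduce (\<lambda>j. x j + d j)) ` torus n (int s)"
  proof
    fix y assume "y \<in> cube n N x s"
    then obtain d where y: "y = (\<lambda>j. if j < n then (x j + d j) mod N else 0)"
      and d: "\<forall>j<n. 0 \<le> d j \<and> d j < int s"
      unfolding cube_def by blast
    show "y \<in> (\<lambda>d. reduce (\<lambda>j. x j + d j)) ` torus n (int s)"
      by (rule image_eqI[where x = "\<lambda>j. if j < n then d j else 0"])
        (use y d in \<open>auto simp: reduce_def torus_def\<close>)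
  qed
  show "(\<lambda>d. reduce (\<lambda>j. x j + d j)) ` torus n (int s) \<subseteq> cube n N x s"
    by (auto simp: cube_def reduce_def torus_def)
qed

definition tiles :: "((nat \<Rightarrow> int) \<times> nat) set" where
  "tiles = {(x, s). x \<in> torus n N \<and> s \<in> {p, q} \<and> (\<lambda>j. x j + shift s j) \<in> L}"

lemma tile_exists:
  assumes y: "y \<in> torus n N"
  shows "\<exists>t\<in>tiles. y \<in> cube n N (fst t) (snd t)"
proof -
  obtain f where "f \<in> cell q \<union> cell p" and yf: "(\<lambda>j. y j - f j) \<in> L"
    using fundamental_domain_exists y torus_subset_Zn by blast
  then obtain s d where s: "s \<in> {p, q}" and d: "d \<in> torus n (int s)"
    and f: "f = (\<lambda>j. d j - shift s j)"
    unfolding cell_def by blast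
  define x where "x = reduce (\<lambda>j. y j - d j)"
  have "(\<lambda>j. x j + shift s j) \<in> L"
  proof (rule lattice_cong_mod_N[OF yf])
    show "(\<lambda>j. x j + shift s j) \<in> Zn"
      using shift_in_Zn by (simp add: x_def reduce_def)
    show "[y j - f j = x j + shift s j] (mod N)" if "j < n" for j
      using that by (simp add: x_def reduce_def f cong_def mod_add_right_eq algebra_simps)
  qed
  then have "(x, s) \<in> tiles" using s by (simp add: tiles_def x_def reduce_in_torus)
  moreover have "reduce (\<lambda>j. x j + d j) = reduce y"
    by (simp add: x_def reduce_def fun_eq_iff mod_add_left_eq)
  then have "y \<in> cube n N x s"
    using d reduce_torus[OF y] by (auto simp: cube_eq_reduce_image)
  ultimately show ?thesis by force
qed

lemma tile_unique:
  assumes t: "(x, s) \<in> tiles" and t': "(x', s') \<in> tiles"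
    and y: "y \<in> cube n N x s" and y': "y \<in> cube n N x' s'"
  shows "(x, s) = (x', s')"
proof -
  obtain d where d: "d \<in> torus n (int s)" and y_eq: "y = reduce (\<lambda>j. x j + d j)"
    using y by (auto simp: cube_eq_reduce_image)
  obtain d' where d': "d' \<in> torus n (int s')" and y_eq': "y = reduce (\<lambda>j. x' j + d' j)"
    using y' by (auto simp: cube_eq_reduce_image)
  define f where "f = (\<lambda>j. d j - shift s j)"
  define f' where "f' = (\<lambda>j. d' j - shift s' j)"
  have "f \<in> cell s" "f' \<in> cell s'" using d d' by (auto simp: cell_def f_def f'_def)
  moreover have "s \<in> {p, q}" "s' \<in> {p, q}" using t t' by (auto simp: tiles_def)
  ultimately have F: "f \<in> cell q \<union> cell p" "f' \<in> cell q \<union> cell p" by auto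
  have x_Zn: "x \<in> Zn" "x' \<in> Zn" and d_Zn: "d \<in> Zn" "d' \<in> Zn"
    using t t' d d' torus_subset_Zn by (auto simp: tiles_def)
  have "(\<lambda>j. (x j + d j) - (x' j + d' j)) \<in> L"
    using x_Zn d_Zn y_eq y_eq' by (intro lattice_if_reduce_eq) auto
  moreover have "(\<lambda>j. (x j + shift s j) - (x' j + shift s' j)) \<in> L"
    using t t' by (intro lattice_diff) (auto simp: tiles_def)
  ultimately have "(\<lambda>j. f j - f' j) \<in> L"
    by (rule lattice_eqI[OF lattice_diff]) (simp add: f_def f'_def)
  then have ff': "f = f'" by (rule fundamental_domain_unique[OF F])
  have ss': "s = s'"
    using cell_determines_side \<open>f \<in> cell s\<close> \<open>f' \<in> cell s'\<close> \<open>s \<in> {p, q}\<close> \<open>s' \<in> {p, q}\<close> ff'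
    by blast
  then have "d = d'" using ff' by (simp add: f_def f'_def fun_eq_iff)
  then have "reduce (\<lambda>j. x j + d j) = reduce (\<lambda>j. x' j + d j)"
    using y_eq y_eq' by simp
  then have "\<forall>j<n. [x j + d j = x' j + d j] (mod N)"
    by (simp only: reduce_eq_iff)
  then have "reduce x = reduce x'" by (simp add: reduce_eq_iff cong_add_rcancel)
  then have "x = x'" using t t' by (simp add: tiles_def reduce_torus)
  with ss' show ?thesis by simp
qed

lemma tiles_tiling: "is_tiling n N tiles"
  unfolding is_tiling_def
proof
  fix y assume "y \<in> torus n N"
  then obtain t where t: "t \<in> tiles" "y \<in> cube n N (fst t) (snd t)"
    using tile_exists by blast
  show "\<exists>!t. t \<in> tiles \<and> y \<in> cube n N (fst t) (snd t)"
  proof (rule ex1I)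
    show "t \<in> tiles \<and> y \<in> cube n N (fst t) (snd t)" using t by simp
    show "t' = t" if "t' \<in> tiles \<and> y \<in> cube n N (fst t') (snd t')" for t'
      using tile_unique[of "fst t'" "snd t'" "fst t" "snd t" y] that t by (simp add: prod_eq_iff)
  qed
qed

lemma side_lt_N:
  assumes s: "s \<in> {p, q}"
  shows "int s < N"
proof -
  have "p \<le> p ^ n" "q \<le> q ^ n" "0 < p ^ n" "0 < q ^ n"
    using p_pos q_pos n_pos by (simp_all add: self_le_power)
  then have "s < p ^ n + q ^ n" using s by auto
  then have "int s < int (p ^ n + q ^ n)" by (simp only: of_nat_less_iff)
  then show ?thesis by simp
qed

lemma tiles_not_adjacent:
  assumes t: "(x, s) \<in> tiles" and t': "(x', s) \<in> tiles" and i: "i < n"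
  shows "\<not> ((\<forall>j<n. [x' j - x j = int s * unitv i j] (mod N)) \<or>
             (\<forall>j<n. [x' j - x j = - (int s * unitv i j)] (mod N)))"
proof -
  have "(\<lambda>j. (x' j + shift s j) - (x j + shift s j)) \<in> L"
    using t t' by (intro lattice_diff) (auto simp: tiles_def)
  then have diff: "(\<lambda>j. x' j - x j) \<in> L" by (rule lattice_eqI) simp
  have "0 < int s" "int s < N" using t p_pos q_pos side_lt_N by (auto simp: tiles_def)
  have "\<not> (\<forall>j<n. [x' j - x j = a * unitv i j] (mod N))" if a: "\<bar>a\<bar> = int s" for a
  proof
    assume "\<forall>j<n. [x' j - x j = a * unitv i j] (mod N)"
    then have "(\<lambda>j. a * unitv i j) \<in> L"
      by (intro lattice_cong_mod_N[OF diff]) (use i in \<open>auto simp: unitv_def\<close>)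
    then have "N dvd a" by (rule N_dvd_if_unitv_multiple[OF i])
    then have "N \<le> int s" using a \<open>0 < int s\<close> dvd_imp_le_int[of a N] N_pos by auto
    then show False using \<open>int s < N\<close> by simp
  qed
  from this[of "int s"] this[of "- int s"] show ?thesis by simp
qed

lemma tiles_unilateral: "unilateral n N tiles"
  unfolding unilateral_def using tiles_not_adjacent by blast

end

theorem theorem4:
  fixes n p q :: nat
  assumes "n \<ge> 2" and "p > 0" and "q > 0" and "coprime p q"
  shows "(\<forall>i<n. (LEAST l::nat. l \<ge> 1 \<and> (\<lambda>j. int l * unitv i j) \<in> latticeA n p q)
                  = p ^ n + q ^ n)
         \<and> (p \<noteq> q \<longrightarrow>
              (\<exists>T. is_tiling n (int (p ^ n + q ^ n)) T \<and>
                   (\<forall>t\<in>T. snd t \<in> {p, q}) \<and>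
                   unilateral n (int (p ^ n + q ^ n)) T))"
proof -
  interpret pq_lattice n p q
    using assms by unfold_locales simp_all
  have N: "int (p ^ n + q ^ n) = N" by simp
  show ?thesis
  proof (intro conjI allI impI)
    show "(LEAST l::nat. l \<ge> 1 \<and> (\<lambda>j. int l * unitv i j) \<in> L) = p ^ n + q ^ n" if "i < n" for i
      using least_multiple_unitv[OF that] by simp
  next
    assume "p \<noteq> q"
    then interpret pq_tiling n p q by unfold_locales
    have "\<forall>t\<in>tiles. snd t \<in> {p, q}" by (auto simp: tiles_def)
    then show "\<exists>T. is_tiling n (int (p ^ n + q ^ n)) T \<and> (\<forall>t\<in>T. snd t \<in> {p, q}) \<and>
        unilateral n (int (p ^ n + q ^ n)) T"
      unfolding N using tiles_tiling tiles_unilateral by blast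
  qed
qed

end
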